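(* Let $\alpha\in\mathbb{N}$, let $n\in\mathbb{N}$ with $3\nmid n$ and $n>6\alpha+3$, and let $\mathbb{S}=\langle 6,6\alpha+3,n\rangle$. Put $\beta_2=12\alpha+6$ and $\beta_3=3n$. Then (i) $F(\mathbb{S})=\frac{\beta_2+\beta_3}{2}-\frac{12-n}{2}$; (ii) $g(\mathbb{S})=\frac{\beta_2+\beta_3}{4}+\frac{n-10}{4}$.
   Context: $\mathbb{N}=\{0,1,2,\dots\}$. $\langle a_1,\dots,a_e\rangle$ is the set of $\mathbb{N}$-linear combinations of $a_1,\dots,a_e$. For a numerical semigroup $\mathbb{S}$, the Frobenius number $F(\mathbb{S})$ is the largest integer not in $\mathbb{S}$, and the genus $g(\mathbb{S})$ is the number of positive integers not in $\mathbb{S}$. *)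

theory Defs
  imports Complex_Main
begin

definition semigroup_gen :: "nat list \<Rightarrow> nat set" where
  "semigroup_gen as = {x. \<exists>cs. length cs = length as \<and> x = (\<Sum>i<length as. cs ! i * as ! i)}"

definition frobenius :: "nat set \<Rightarrow> int" where
  "frobenius S = (GREATEST z :: int. z \<notin> int ` S)"

definition genus :: "nat set \<Rightarrow> nat" where
  "genus S = card {x :: nat. 0 < x \<and> x \<notin> S}"

end

theory Submission
  imports Defs "HOL-Number_Theory.Cong"
begin

(* Since n lies in T = <2, 2 alpha + 1>, the semigroup S = <6, 6 alpha + 3, n> is the gluing
   3 T + n N.  As n is invertible mod 3, every residue class mod 3 is the class of n k for exactly
   one k < 3, and an element of that class lies in S iff it is n k + 3 t with t in T.  The gaps of S
   in this class are therefore the smaller elements of the class together with n k + 3 (T's gaps).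
   Hence F(S) = 2 n + 3 F(T) and g(S) = 3 g(T) + sum_{k<3} floor(n k / 3) = 3 g(T) + n - 1, while
   the gaps of T are the odd numbers below 2 alpha + 1, so F(T) = 2 alpha - 1 and g(T) = alpha. *)

lemma semigroup_gen_Nil: "semigroup_gen [] = {0}"
  by (simp add: semigroup_gen_def)

lemma semigroup_gen_Cons: "semigroup_gen (a # as) = {a * i + y | i y. y \<in> semigroup_gen as}"
proof -
  have sum_Cons: "(\<Sum>i<length (c # cs). (c # cs) ! i * (a # as) ! i)
      = a * c + (\<Sum>i<length cs. cs ! i * as ! i)"
    if "length cs = length as" for c cs
    using that by (simp only: length_Cons sum.lessThan_Suc_shift) (simp add: mult.commute)
  show ?thesis
  proof (intro set_eqI iffI)
    fix x assume "x \<in> semigroup_gen (a # as)"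
    then obtain cs where cs: "length cs = length (a # as)" "x = (\<Sum>i<length cs. cs ! i * (a # as) ! i)"
      unfolding semigroup_gen_def mem_Collect_eq by metis
    then obtain c cs' where "cs = c # cs'" "length cs' = length as"
      by (cases cs) auto
    then have "x = a * c + (\<Sum>i<length cs'. cs' ! i * as ! i)"
      using cs(2) sum_Cons by metis
    with \<open>length cs' = length as\<close> show "x \<in> {a * i + y | i y. y \<in> semigroup_gen as}"
      unfolding semigroup_gen_def by force
  next
    fix x assume "x \<in> {a * i + y | i y. y \<in> semigroup_gen as}"
    then obtain c cs where "length cs = length as" "x = a * c + (\<Sum>i<length cs. cs ! i * as ! i)"
      unfolding semigroup_gen_def by auto
    then show "x \<in> semigroup_gen (a # as)"
      using sum_Cons[of cs c] unfolding semigroup_gen_def by (intro CollectI exI[of _ "c # cs"]) simp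
  qed
qed

lemma frobenius_eqI:
  assumes "-1 \<le> z" "z \<notin> int ` S" "\<And>x. z < int x \<Longrightarrow> x \<in> S"
  shows "frobenius S = z"
  unfolding frobenius_def
proof (rule Greatest_equality)
  show "y \<le> z" if "y \<notin> int ` S" for y
  proof (rule ccontr)
    assume "\<not> y \<le> z"
    then have "y = int (nat y)" and "z < int (nat y)"
      using assms(1) by simp_all
    then have "y \<in> int ` S"
      using assms(3) by (metis image_eqI)
    with that show False ..
  qed
qed (fact assms(2))

lemma frobenius_cofinite:
  assumes "finite (- S)"
  shows "-1 \<le> frobenius S" and "frobenius S \<notin> int ` S"
    and "x \<notin> S \<Longrightarrow> int x \<le> frobenius S"
proof -
  define z where "z = (if S = UNIV then -1 else int (Max (- S)))"
  have z_notin: "z \<notin> int ` S"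
  proof (cases "S = UNIV")
    case False
    then have "Max (- S) \<notin> S"
      using assms Max_in[of "- S"] by auto
    then show ?thesis
      using False by (auto simp: z_def)
  qed (auto simp: z_def)
  have z_ge: "int y \<le> z" if "y \<notin> S" for y
    using that assms by (auto simp: z_def)
  have "frobenius S = z"
    by (rule frobenius_eqI) (use z_notin z_ge in \<open>force simp: z_def\<close>)+
  then show "-1 \<le> frobenius S" and "frobenius S \<notin> int ` S"
    and "x \<notin> S \<Longrightarrow> int x \<le> frobenius S"
    using z_notin z_ge by (auto simp: z_def)
qed

lemma genus_eq_card_Compl: "0 \<in> S \<Longrightarrow> genus S = card (- S)"
  unfolding genus_def by (rule arg_cong[where f = card]) (auto intro: gr0I)

lemma card_cong_below:
  fixes d m :: nat
  assumes "0 < d"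
  shows "card {x. x < m \<and> [x = m] (mod d)} = m div d"
proof -
  have "{x. x < m \<and> [x = m] (mod d)} = (\<lambda>j. m mod d + d * j) ` {..<m div d}"
  proof (intro set_eqI iffI)
    fix x assume "x \<in> {x. x < m \<and> [x = m] (mod d)}"
    then have "x < m" "x mod d = m mod d" by (simp_all add: cong_def)
    have "x div d < m div d"
    proof (rule ccontr)
      assume "\<not> x div d < m div d"
      then have "d * (m div d) \<le> d * (x div d)"
        by (simp add: not_less)
      then have "m \<le> x"
        using \<open>x mod d = m mod d\<close> mult_div_mod_eq[of d m] mult_div_mod_eq[of d x] by linarith
      then show False
        using \<open>x < m\<close> by simp
    qed
    moreover have "x = m mod d + d * (x div d)"
      using \<open>x mod d = m mod d\<close> mod_mult_div_eq[of x d] by simp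
    ultimately show "x \<in> (\<lambda>j. m mod d + d * j) ` {..<m div d}"
      by blast
  next
    fix x assume "x \<in> (\<lambda>j. m mod d + d * j) ` {..<m div d}"
    then obtain j where "j < m div d" "x = m mod d + d * j" by blast
    moreover have "d * j + d \<le> d * (m div d)"
      using \<open>j < m div d\<close> mult_le_mono2[of "Suc j" "m div d" d] by simp
    moreover have "m mod d + d * j < m"
      using calculation assms mod_mult_div_eq[of m d] by linarith
    ultimately show "x \<in> {x. x < m \<and> [x = m] (mod d)}"
      by (simp add: cong_def)
  qed
  then show ?thesis
    by (simp add: card_image inj_on_def assms)
qed

definition glue :: "nat set \<Rightarrow> nat \<Rightarrow> nat \<Rightarrow> nat set" where
  "glue T d n = {d * t + n * l | t l. t \<in> T}"

locale nat_gluing =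
  fixes T :: "nat set" and d n :: nat
  assumes zero_mem: "0 \<in> T"
    and add_mem: "a \<in> T \<Longrightarrow> b \<in> T \<Longrightarrow> a + b \<in> T"
    and finite_gaps: "finite (- T)"
    and n_mem: "n \<in> T"
    and d_pos: "0 < d"
    and coprime: "coprime n d"
begin

lemma mult_n_mem: "n * m \<in> T"
  by (induction m) (simp_all add: zero_mem add_mem n_mem)

lemma residue_class_exists: "\<exists>k<d. [n * k = x] (mod d)"
proof -
  obtain u where u: "[n * u = 1] (mod d)"
    using cong_solve_coprime_nat[OF coprime] by auto
  have "[n * ((u * x) mod d) = (n * u) * x] (mod d)"
    by (simp add: cong_def mod_mult_right_eq mult.assoc)
  also have "[(n * u) * x = 1 * x] (mod d)"
    using u by (rule cong_scalar_right)
  finally have "[n * ((u * x) mod d) = x] (mod d)"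
    by simp
  moreover have "(u * x) mod d < d"
    using d_pos by simp
  ultimately show ?thesis
    by blast
qed

lemma residue_class_unique:
  assumes "k < d" "k' < d" "[n * k = n * k'] (mod d)"
  shows "k = k'"
  using assms cong_less_modulus_unique_nat cong_mult_lcancel_nat[OF coprime] by blast

lemma mem_glue_iff:
  assumes "k < d" "[n * k = x] (mod d)"
  shows "x \<in> glue T d n \<longleftrightarrow> (\<exists>t\<in>T. x = n * k + d * t)"
proof
  assume "x \<in> glue T d n"
  then obtain t l where "t \<in> T" and x: "x = d * t + n * l"
    by (auto simp: glue_def)
  define k' where "k' = l mod d"
  have "x = d * t + n * (k' + d * (l div d))"
    unfolding x k'_def by simp
  then have x': "x = n * k' + d * (t + n * (l div d))"
    by (simp add: algebra_simps)
  then have "[n * k = n * k'] (mod d)"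
    using assms(2) by (simp add: cong_def)
  then have "k' = k"
    using assms(1) d_pos residue_class_unique[of k k'] by (simp add: k'_def)
  moreover have "t + n * (l div d) \<in> T"
    using \<open>t \<in> T\<close> by (simp add: add_mem mult_n_mem)
  ultimately show "\<exists>t\<in>T. x = n * k + d * t"
    using x' by blast
next
  assume "\<exists>t\<in>T. x = n * k + d * t"
  then show "x \<in> glue T d n"
    by (auto simp: glue_def add.commute)
qed

definition class_gaps :: "nat \<Rightarrow> nat set" where
  "class_gaps k = {x. x < n * k \<and> [x = n * k] (mod d)} \<union> (\<lambda>t. n * k + d * t) ` (- T)"

lemma class_gaps_cong: "x \<in> class_gaps k \<Longrightarrow> [n * k = x] (mod d)"
  by (auto simp: class_gaps_def cong_def cong_sym_eq)

lemma Compl_glue: "- glue T d n = (\<Union>k<d. class_gaps k)"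
proof (intro set_eqI iffI)
  fix x assume x: "x \<in> - glue T d n"
  obtain k where k: "k < d" "[n * k = x] (mod d)"
    using residue_class_exists by blast
  have "x \<in> class_gaps k"
  proof (cases "x < n * k")
    case True
    then show ?thesis
      using k(2) by (simp add: class_gaps_def cong_sym_eq)
  next
    case False
    then obtain t where t: "x = n * k + d * t"
      using k(2) by (metis cong_le_nat cong_sym_eq not_less add.commute mult.commute)
    then have "t \<notin> T"
      using x mem_glue_iff[OF k] by auto
    with t show ?thesis
      unfolding class_gaps_def by blast
  qed
  with k(1) show "x \<in> (\<Union>k<d. class_gaps k)"
    by blast
next
  fix x assume "x \<in> (\<Union>k<d. class_gaps k)"
  then obtain k where k: "k < d" "x \<in> class_gaps k"
    by blast
  have "\<not> (\<exists>t\<in>T. x = n * k + d * t)"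
  proof
    assume "\<exists>t\<in>T. x = n * k + d * t"
    then obtain t where "t \<in> T" "x = n * k + d * t"
      by blast
    with k(2) d_pos show False
      by (auto simp: class_gaps_def)
  qed
  then show "x \<in> - glue T d n"
    using mem_glue_iff[OF k(1) class_gaps_cong[OF k(2)]] by simp
qed

lemma class_gaps_disjoint:
  assumes "k < d" "k' < d" "k \<noteq> k'"
  shows "class_gaps k \<inter> class_gaps k' = {}"
proof -
  have "[n * k = n * k'] (mod d)" if "x \<in> class_gaps k" "x \<in> class_gaps k'" for x
    using class_gaps_cong[OF that(1)] class_gaps_cong[OF that(2)] by (metis cong_sym cong_trans)
  then show ?thesis
    using assms residue_class_unique by blast
qed

lemma card_class_gaps: "card (class_gaps k) = n * k div d + card (- T)"
proof -
  have "card (class_gaps k)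
      = card {x. x < n * k \<and> [x = n * k] (mod d)} + card ((\<lambda>t. n * k + d * t) ` (- T))"
    unfolding class_gaps_def by (rule card_Un_disjoint) (auto simp: finite_gaps)
  also have "\<dots> = n * k div d + card (- T)"
    using d_pos by (simp add: card_cong_below card_image inj_on_def)
  finally show ?thesis .
qed

lemma zero_mem_glue: "0 \<in> glue T d n"
  using mem_glue_iff[of 0 0] d_pos zero_mem by auto

theorem genus_glue: "genus (glue T d n) = d * genus T + (\<Sum>k<d. n * k div d)"
proof -
  have "genus (glue T d n) = card (\<Union>k<d. class_gaps k)"
    using zero_mem_glue by (simp add: genus_eq_card_Compl Compl_glue)
  also have "\<dots> = (\<Sum>k<d. card (class_gaps k))"
  proof (rule card_UN_disjoint)
    show "\<forall>k\<in>{..<d}. finite (class_gaps k)"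
      by (simp add: class_gaps_def finite_gaps)
    show "\<forall>k\<in>{..<d}. \<forall>k'\<in>{..<d}. k \<noteq> k'
        \<longrightarrow> class_gaps k \<inter> class_gaps k' = {}"
      using class_gaps_disjoint by blast
  qed simp
  also have "\<dots> = d * genus T + (\<Sum>k<d. n * k div d)"
    using zero_mem by (simp add: card_class_gaps sum.distrib genus_eq_card_Compl)
  finally show ?thesis .
qed

theorem frobenius_glue: "frobenius (glue T d n) = int (n * (d - 1)) + int d * frobenius T"
proof -
  define f where "f = frobenius T"
  have f_ge: "-1 \<le> f" and f_notin: "f \<notin> int ` T"
    and f_max: "\<And>t. t \<notin> T \<Longrightarrow> int t \<le> f"
    using frobenius_cofinite[OF finite_gaps] by (simp_all add: f_def)
  have "d - 1 \<le> n * (d - 1)"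
    using coprime by (cases "n = 0") auto
  show ?thesis
    unfolding f_def[symmetric]
  proof (rule frobenius_eqI)
    have "- int d \<le> int d * f"
      using mult_left_mono[OF f_ge, of "int d"] by simp
    moreover have "int (d - 1) \<le> int (n * (d - 1))"
      using \<open>d - 1 \<le> n * (d - 1)\<close> by (simp only: of_nat_le_iff)
    moreover have "int (d - 1) = int d - 1"
      using d_pos by simp
    ultimately show "-1 \<le> int (n * (d - 1)) + int d * f"
      by linarith
  next
    show "int (n * (d - 1)) + int d * f \<notin> int ` glue T d n"
    proof
      assume "int (n * (d - 1)) + int d * f \<in> int ` glue T d n"
      then obtain x where x: "x \<in> glue T d n" "int x = int (n * (d - 1)) + int d * f"
        by auto
      then have "[n * (d - 1) = x] (mod d)"
        by (simp add: cong_int_iff[symmetric] cong_iff_dvd_diff)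
      moreover have "d - 1 < d"
        using d_pos by simp
      ultimately obtain t where "t \<in> T" "x = n * (d - 1) + d * t"
        using x(1) mem_glue_iff by blast
      then have "f = int t"
        using x(2) d_pos by simp
      with \<open>t \<in> T\<close> f_notin show False
        by blast
    qed
  next
    fix x assume x: "int (n * (d - 1)) + int d * f < int x"
    obtain k where k: "k < d" "[n * k = x] (mod d)"
      using residue_class_exists by blast
    then obtain q where q: "int x - int (n * k) = int d * q"
      by (metis cong_int_iff cong_iff_dvd_diff cong_sym dvd_def)
    have "n * k \<le> n * (d - 1)"
      using k(1) by (intro mult_le_mono2) linarith
    then have "int d * f < int d * q"
      using x q by linarith
    then have "f < q"
      using d_pos by simp
    have "0 \<le> q"
      using \<open>f < q\<close> f_ge by linarith
    have "nat q \<in> T"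
    proof (rule ccontr)
      assume "nat q \<notin> T"
      then have "q \<le> f"
        using f_max[of "nat q"] \<open>0 \<le> q\<close> by simp
      with \<open>f < q\<close> show False
        by simp
    qed
    moreover have "int x = int (n * k + d * nat q)"
      using q \<open>0 \<le> q\<close> by simp
    then have "x = n * k + d * nat q"
      by (simp only: of_nat_eq_iff)
    ultimately show "x \<in> glue T d n"
      using mem_glue_iff[OF k] by blast
  qed
qed

end

lemma semigroup_gen_two_odd: "semigroup_gen [2, 2 * a + 1] = {m. even m \<or> 2 * a + 1 \<le> m}"
proof (intro set_eqI iffI)
  fix m assume "m \<in> semigroup_gen [2, 2 * a + 1]"
  then obtain i j where m: "m = 2 * i + (2 * a + 1) * j"
    by (auto simp: semigroup_gen_Cons semigroup_gen_Nil)
  show "m \<in> {m. even m \<or> 2 * a + 1 \<le> m}"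
  proof (cases "j = 0")
    case False
    then have "2 * a + 1 \<le> (2 * a + 1) * j"
      using mult_le_mono2[of 1 j "2 * a + 1"] by simp
    then show ?thesis
      using m by simp
  qed (simp add: m)
next
  fix m assume m: "m \<in> {m. even m \<or> 2 * a + 1 \<le> m}"
  have "\<exists>i j. m = 2 * i + (2 * a + 1) * j"
  proof (cases "even m")
    case True
    then show ?thesis
      by (metis evenE mult_0_right add_0_right)
  next
    case False
    then have "2 * a + 1 \<le> m" and "even (m - (2 * a + 1))"
      using m by auto
    from this(2) obtain i where "m - (2 * a + 1) = 2 * i"
      by (rule evenE)
    then have "m = 2 * i + (2 * a + 1) * 1"
      using \<open>2 * a + 1 \<le> m\<close> by simp
    then show ?thesis
      by blast
  qed
  then show "m \<in> semigroup_gen [2, 2 * a + 1]"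
    by (auto simp: semigroup_gen_Cons semigroup_gen_Nil)
qed

lemma Compl_semigroup_gen_two_odd: "- semigroup_gen [2, 2 * a + 1] = (\<lambda>j. 2 * j + 1) ` {..<a}"
proof (intro set_eqI iffI)
  fix m assume "m \<in> - semigroup_gen [2, 2 * a + 1]"
  then have "odd m" "m < 2 * a + 1"
    unfolding semigroup_gen_two_odd by auto
  then show "m \<in> (\<lambda>j. 2 * j + 1) ` {..<a}"
    by (auto elim!: oddE)
qed (unfold semigroup_gen_two_odd, auto)

lemma genus_semigroup_gen_two_odd: "genus (semigroup_gen [2, 2 * a + 1]) = a"
proof -
  have "0 \<in> semigroup_gen [2, 2 * a + 1]"
    unfolding semigroup_gen_two_odd by simp
  then have "genus (semigroup_gen [2, 2 * a + 1]) = card ((\<lambda>j. 2 * j + 1) ` {..<a})"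
    by (simp only: genus_eq_card_Compl Compl_semigroup_gen_two_odd)
  also have "\<dots> = a"
    by (simp add: card_image inj_on_def)
  finally show ?thesis .
qed

lemma frobenius_semigroup_gen_two_odd: "frobenius (semigroup_gen [2, 2 * a + 1]) = 2 * int a - 1"
proof (rule frobenius_eqI)
  show "2 * int a - 1 \<notin> int ` semigroup_gen [2, 2 * a + 1]"
  proof
    assume "2 * int a - 1 \<in> int ` semigroup_gen [2, 2 * a + 1]"
    then obtain m where "int m = 2 * int a - 1" "even m \<or> 2 * a + 1 \<le> m"
      unfolding semigroup_gen_two_odd by auto
    then show False
      by presburger
  qed
  show "x \<in> semigroup_gen [2, 2 * a + 1]" if "2 * int a - 1 < int x" for x
  proof -
    have "x = 2 * a \<or> 2 * a + 1 \<le> x"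
      using that by linarith
    then show ?thesis
      unfolding semigroup_gen_two_odd by auto
  qed
qed simp

lemma semigroup_gen_three_eq_glue: "semigroup_gen [d * a, d * b, n] = glue (semigroup_gen [a, b]) d n"
proof (intro set_eqI iffI)
  fix x assume "x \<in> semigroup_gen [d * a, d * b, n]"
  then obtain i j l where "x = d * a * i + (d * b * j + n * l)"
    by (auto simp: semigroup_gen_Cons semigroup_gen_Nil)
  then have "x = d * (a * i + b * j) + n * l"
    by (simp add: algebra_simps)
  moreover have "a * i + b * j \<in> semigroup_gen [a, b]"
    by (auto simp: semigroup_gen_Cons semigroup_gen_Nil)
  ultimately show "x \<in> glue (semigroup_gen [a, b]) d n"
    unfolding glue_def by blast
next
  fix x assume "x \<in> glue (semigroup_gen [a, b]) d n"
  then obtain i j l where "x = d * (a * i + b * j) + n * l"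
    by (auto simp: glue_def semigroup_gen_Cons semigroup_gen_Nil)
  then have "x = d * a * i + (d * b * j + (n * l + 0))"
    by (simp add: algebra_simps)
  then show "x \<in> semigroup_gen [d * a, d * b, n]"
    unfolding semigroup_gen_Cons semigroup_gen_Nil by blast
qed

lemma sum_mult_div_3:
  fixes n :: nat
  assumes "\<not> 3 dvd n"
  shows "(\<Sum>k<3. n * k div 3) = n - 1"
proof -
  have "n mod 3 \<noteq> 0" "n mod 3 < 3"
    using assms by (auto simp: dvd_eq_mod_eq_0)
  then have "n mod 3 = 1 \<or> n mod 3 = 2"
    by arith
  then have "n mod 3 = 1 \<and> n * 2 mod 3 = 2 \<or> n mod 3 = 2 \<and> n * 2 mod 3 = 1"
    using mod_mult_left_eq[of n 3 2] by auto
  then have "n div 3 + n * 2 div 3 = n - 1"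
    using div_mult_mod_eq[of n 3] div_mult_mod_eq[of "n * 2" 3] by linarith
  then show ?thesis
    by (simp add: lessThan_nat_numeral)
qed

theorem corollary3:
  fixes \<alpha> n :: nat
  assumes "\<not> (3 dvd n)"
    and "n > 6 * \<alpha> + 3"
  defines "S \<equiv> semigroup_gen [6, 6 * \<alpha> + 3, n]"
    and "\<beta>2 \<equiv> 12 * \<alpha> + 6"
    and "\<beta>3 \<equiv> 3 * n"
  shows "real_of_int (frobenius S) = (real \<beta>2 + real \<beta>3) / 2 - (12 - real n) / 2
    \<and> real (genus S) = (real \<beta>2 + real \<beta>3) / 4 + (real n - 10) / 4"
proof -
  define T where "T = semigroup_gen [2, 2 * \<alpha> + 1]"
  have "[6, 6 * \<alpha> + 3, n] = [3 * 2, 3 * (2 * \<alpha> + 1), n]"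
    by simp
  then have S_eq: "S = glue T 3 n"
    unfolding S_def T_def by (simp only: semigroup_gen_three_eq_glue)
  interpret nat_gluing T 3 n
  proof
    show "0 \<in> T" "n \<in> T"
      using assms(2) unfolding T_def semigroup_gen_two_odd by simp_all
    show "a \<in> T \<Longrightarrow> b \<in> T \<Longrightarrow> a + b \<in> T" for a b
      unfolding T_def semigroup_gen_two_odd by auto
    show "finite (- T)"
      unfolding T_def Compl_semigroup_gen_two_odd by simp
    show "coprime n 3"
      using prime_imp_coprime[of 3 n] assms(1) by (simp add: ac_simps)
  qed simp
  have "frobenius T = 2 * int \<alpha> - 1"
    unfolding T_def by (rule frobenius_semigroup_gen_two_odd)
  then have frobenius_S: "frobenius S = 2 * int n + 6 * int \<alpha> - 3"
    using frobenius_glue by (simp add: S_eq)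
  have "genus T = \<alpha>"
    unfolding T_def by (rule genus_semigroup_gen_two_odd)
  then have genus_S: "genus S = 3 * \<alpha> + (n - 1)"
    using genus_glue sum_mult_div_3[OF assms(1)] by (simp add: S_eq)
  show ?thesis
    using frobenius_S genus_S assms(2) by (simp add: \<beta>2_def \<beta>3_def of_nat_diff field_simps)
qed

end
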